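(* Let $Q_1,\ldots,Q_m\in\mathbb R^{n\times n}$ be symmetric positive semidefinite, $a_{ij}\in\{-1,0,1\}$, $b_i\in\mathbb R^n$, $c_i\in\mathbb R$ for $i=0,\ldots,p$, $j=1,\ldots,m$, and $-\infty\le l_i\le u_i\le+\infty$ for $i=1,\ldots,p$. Let $g_i(x)=\sum_{j=1}^m a_{ij}x^TQ_jx+2b_i^Tx+c_i$ and consider \[ ({\rm QCQP})\quad \min_{x\in\mathbb R^n}\ g_0(x)\quad\text{s.t.}\quad l_i\le g_i(x)\le u_i,\ i=1,\ldots,p. \] Let $K=\{j\in\{1,\ldots,m\}:\ a_{0j}=-1\text{ or } a_{ij}\ne0\text{ for some } i\in\{1,\ldots,p\}\}$ and consider \[ ({\rm CR'})\quad \min_{x,\,t_j(j\in K)}\ \sum_{j\notin K}a_{0j}x^TQ_jx+\sum_{j\in K}a_{0j}t_j+2b_0^Tx+c_0 \] \[ \text{s.t.}\quad l_i\le \sum_{j\in K}a_{ij}t_j+2b_i^Tx+c_i\le u_i,\ i=1,\ldots,p,\qquad \left\|\begin{pmatrix}Q_j^{1/2}x\\ \frac{t_j-1}{2}\end{pmatrix}\right\|\le\frac{t_j+1}{2},\ j\in K. \] Suppose \[ \max_{j\in K}\ \dim\Big({\rm span}\Big(\{b_1,\ldots,b_p\}\cup\mathcal N(Q_j)\cup\bigcup_{i\in\{1,\ldots,m\},\,i\ne j}\mathcal R(Q_i)\Big)\Big)\le n-1, \] and $v({\rm CR'})>-\infty$. Then (QCQP) is equivalent to (CR'), in the sense that $x^*$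 globally solves (QCQP) if and only if $(x^*,t_j^*(j\in K)):=(x^*,x^{*T}Q_jx^*(j\in K))$ globally solves (CR').
   Context: $\mathcal N(Q)$, $\mathcal R(Q)$ denote null space and range; $Q^{1/2}$ is the positive semidefinite square root; $v(\cdot)$ denotes optimal value; $\|\cdot\|$ is the Euclidean norm. *)

theory Defs
  imports "HOL-Analysis.Analysis" "HOL-Library.Extended_Real"
begin

definition psd_sym :: "real^'n^'n \<Rightarrow> bool" where
  "psd_sym Q \<longleftrightarrow> transpose Q = Q \<and> (\<forall>x. 0 \<le> x \<bullet> (Q *v x))"

definition psd_sqrt :: "real^'n^'n \<Rightarrow> real^'n^'n" where
  "psd_sqrt Q = (THE S. psd_sym S \<and> S ** S = Q)"

definition null_space :: "real^'n^'n \<Rightarrow> (real^'n) set" where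
  "null_space Q = {x. Q *v x = 0}"

definition range_space :: "real^'n^'n \<Rightarrow> (real^'n) set" where
  "range_space Q = range (\<lambda>x. Q *v x)"

definition gfun :: "nat \<Rightarrow> (nat \<Rightarrow> real^'n^'n) \<Rightarrow> (nat \<Rightarrow> nat \<Rightarrow> real)
    \<Rightarrow> (nat \<Rightarrow> real^'n) \<Rightarrow> (nat \<Rightarrow> real) \<Rightarrow> nat \<Rightarrow> real^'n \<Rightarrow> real" where
  "gfun m Q a b c i x = (\<Sum>j=1..m. a i j * (x \<bullet> (Q j *v x))) + 2 * (b i \<bullet> x) + c i"

definition qcqp_feasible :: "nat \<Rightarrow> nat \<Rightarrow> (nat \<Rightarrow> real^'n^'n) \<Rightarrow> (nat \<Rightarrow> nat \<Rightarrow> real)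
    \<Rightarrow> (nat \<Rightarrow> real^'n) \<Rightarrow> (nat \<Rightarrow> real) \<Rightarrow> (nat \<Rightarrow> ereal) \<Rightarrow> (nat \<Rightarrow> ereal) \<Rightarrow> real^'n \<Rightarrow> bool" where
  "qcqp_feasible m p Q a b c l u x \<longleftrightarrow>
     (\<forall>i\<in>{1..p}. l i \<le> ereal (gfun m Q a b c i x) \<and> ereal (gfun m Q a b c i x) \<le> u i)"

definition qcqp_solves where
  "qcqp_solves m p Q a b c l u x \<longleftrightarrow> qcqp_feasible m p Q a b c l u x \<and>
     (\<forall>y. qcqp_feasible m p Q a b c l u y \<longrightarrow> gfun m Q a b c 0 x \<le> gfun m Q a b c 0 y)"

definition Kset :: "nat \<Rightarrow> nat \<Rightarrow> (nat \<Rightarrow> nat \<Rightarrow> real) \<Rightarrow> nat set" where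
  "Kset m p a = {j\<in>{1..m}. a 0 j = -1 \<or> (\<exists>i\<in>{1..p}. a i j \<noteq> 0)}"

text \<open>Objective of (CR'); the variables t_j are only used for j in K.\<close>
definition cr_obj :: "nat \<Rightarrow> nat \<Rightarrow> (nat \<Rightarrow> real^'n^'n) \<Rightarrow> (nat \<Rightarrow> nat \<Rightarrow> real)
    \<Rightarrow> (nat \<Rightarrow> real^'n) \<Rightarrow> (nat \<Rightarrow> real) \<Rightarrow> real^'n \<Rightarrow> (nat \<Rightarrow> real) \<Rightarrow> real" where
  "cr_obj m p Q a b c x t =
     (\<Sum>j\<in>{1..m} - Kset m p a. a 0 j * (x \<bullet> (Q j *v x)))
     + (\<Sum>j\<in>Kset m p a. a 0 j * t j) + 2 * (b 0 \<bullet> x) + c 0"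

definition cr_con :: "nat \<Rightarrow> nat \<Rightarrow> (nat \<Rightarrow> nat \<Rightarrow> real)
    \<Rightarrow> (nat \<Rightarrow> real^'n) \<Rightarrow> (nat \<Rightarrow> real) \<Rightarrow> nat \<Rightarrow> real^'n \<Rightarrow> (nat \<Rightarrow> real) \<Rightarrow> real" where
  "cr_con m p a b c i x t = (\<Sum>j\<in>Kset m p a. a i j * t j) + 2 * (b i \<bullet> x) + c i"

text \<open>Feasible set of (CR'); the stacked vector (Q_j^(1/2) x, (t_j-1)/2) is an element
  of the product space real^'n \<times> real, whose norm is the Euclidean norm.\<close>
definition cr_feasible :: "nat \<Rightarrow> nat \<Rightarrow> (nat \<Rightarrow> real^'n^'n) \<Rightarrow> (nat \<Rightarrow> nat \<Rightarrow> real)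
    \<Rightarrow> (nat \<Rightarrow> real^'n) \<Rightarrow> (nat \<Rightarrow> real) \<Rightarrow> (nat \<Rightarrow> ereal) \<Rightarrow> (nat \<Rightarrow> ereal)
    \<Rightarrow> real^'n \<Rightarrow> (nat \<Rightarrow> real) \<Rightarrow> bool" where
  "cr_feasible m p Q a b c l u x t \<longleftrightarrow>
     (\<forall>i\<in>{1..p}. l i \<le> ereal (cr_con m p a b c i x t) \<and> ereal (cr_con m p a b c i x t) \<le> u i) \<and>
     (\<forall>j\<in>Kset m p a. norm (psd_sqrt (Q j) *v x, (t j - 1) / 2) \<le> (t j + 1) / 2)"

definition cr_solves where
  "cr_solves m p Q a b c l u x t \<longleftrightarrow> cr_feasible m p Q a b c l u x t \<and>
     (\<forall>y s. cr_feasible m p Q a b c l u y s \<longrightarrow> cr_obj m p Q a b c x t \<le> cr_obj m p Q a b c y s)"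

text \<open>Optimal value v(CR') as an extended real (+\<infinity> if infeasible).\<close>
definition cr_value where
  "cr_value m p Q a b c l u =
     (INF z\<in>{(x,t). cr_feasible m p Q a b c l u x t}. ereal (cr_obj m p Q a b c (fst z) (snd z)))"

end

theory Submission
  imports Defs
begin

text \<open>The cone constraint of (CR') says exactly \<open>x\<^sup>T Q\<^sub>j x \<le> t\<^sub>j\<close>, so (CR') relaxes
  \<open>t\<^sub>j = x\<^sup>T Q\<^sub>j x\<close> to an inequality, and every QCQP-feasible point lifts to a
  CR'-feasible point with the same objective value. Conversely, for \<open>j \<in> K\<close> the dimension
  hypothesis yields a direction \<open>d\<close> orthogonal to all \<open>b\<^sub>i\<close>, annihilated by every \<open>Q\<^sub>i\<close>
  with \<open>i \<noteq> j\<close>, and with \<open>d\<^sup>T Q\<^sub>j d > 0\<close>. Moving a CR'-feasible \<open>(y, s)\<close> along \<open>d\<close>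
  changes only \<open>x\<^sup>T Q\<^sub>j x\<close>, which grows quadratically, so it can be raised to exactly
  \<open>s\<^sub>j\<close>, in the direction in which \<open>b\<^sub>0\<^sup>T x\<close> does not increase. Doing this for each
  \<open>j \<in> K\<close> produces a QCQP-feasible point whose objective is at most that of \<open>(y, s)\<close>.
  Hence both problems have the same lower bounds, and their solutions correspond.
  The PSD square root in the cone constraint rests on the spectral theorem for symmetric matrices,
  obtained from maximizers of the Rayleigh quotient.\<close>

lemma symmetric_matrix_self_adjoint:
  fixes A :: "real^'n^'n"
  assumes "transpose A = A"
  shows "u \<bullet> (A *v v) = (A *v u) \<bullet> v"
proof -
  have "u \<bullet> (A *v v) = (transpose A *v u) \<bullet> v" by (simp add: dot_lmul_matrix)
  then show ?thesis using assms by simp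
qed

lemma inner_self_adjoint_add_scaleR:
  fixes f :: "'a::real_inner \<Rightarrow> 'a"
  assumes f: "linear f" and adj: "\<And>u v. u \<bullet> f v = f u \<bullet> v"
  shows "(z + t *\<^sub>R d) \<bullet> f (z + t *\<^sub>R d) = z \<bullet> f z + 2 * t * (d \<bullet> f z) + t\<^sup>2 * (d \<bullet> f d)"
proof -
  have "z \<bullet> f d = d \<bullet> f z" using adj[of z d] by (simp add: inner_commute)
  then show ?thesis
    by (simp add: linear_add[OF f] linear_scale[OF f] inner_add_left inner_add_right
        power2_eq_square algebra_simps)
qed

lemma linear_plus_quadratic_nonneg_imp_zero:
  fixes c d :: real
  assumes nonneg: "\<And>t. 0 \<le> 2 * t * c + t\<^sup>2 * d"
  shows "c = 0"
proof -
  define e where "e = \<bar>d\<bar> + 1"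
  have e: "0 < e" by (simp add: e_def add_nonneg_pos)
  define t where "t = - c / e"
  have "t\<^sup>2 * d \<le> t\<^sup>2 * e" unfolding e_def by (intro mult_left_mono) auto
  also have "\<dots> = c\<^sup>2 / e" using e by (simp add: t_def power2_eq_square)
  finally have "0 \<le> 2 * t * c + c\<^sup>2 / e" using nonneg[of t] by linarith
  also have "2 * t * c = - 2 * (c\<^sup>2 / e)" by (simp add: t_def power2_eq_square)
  finally have "c\<^sup>2 / e \<le> 0" by simp
  then show ?thesis using e by (simp add: divide_le_0_iff)
qed

lemma self_adjoint_nonneg_zero_imp_orthogonal:
  fixes f :: "'a::real_inner \<Rightarrow> 'a"
  assumes f: "linear f" and adj: "\<And>u v. u \<bullet> f v = f u \<bullet> v"
    and V: "subspace V" and nonneg: "\<And>y. y \<in> V \<Longrightarrow> 0 \<le> y \<bullet> f y"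
    and x: "x \<in> V" "x \<bullet> f x = 0" and w: "w \<in> V"
  shows "w \<bullet> f x = 0"
proof (rule linear_plus_quadratic_nonneg_imp_zero)
  fix t
  have "x + t *\<^sub>R w \<in> V" using V x w by (simp add: subspace_add subspace_scale)
  then have "0 \<le> (x + t *\<^sub>R w) \<bullet> f (x + t *\<^sub>R w)" by (rule nonneg)
  then show "0 \<le> 2 * t * (w \<bullet> f x) + t\<^sup>2 * (w \<bullet> f w)"
    using x by (simp add: inner_self_adjoint_add_scaleR[OF f adj])
qed

lemma symmetric_matrix_quadratic_form_add_scaleR:
  fixes M :: "real^'n^'n"
  assumes "transpose M = M"
  shows "(z + t *\<^sub>R d) \<bullet> (M *v (z + t *\<^sub>R d)) =
    z \<bullet> (M *v z) + 2 * t * (d \<bullet> (M *v z)) + t\<^sup>2 * (d \<bullet> (M *v d))"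
  by (rule inner_self_adjoint_add_scaleR[OF matrix_vector_mul_linear
        symmetric_matrix_self_adjoint[OF assms]])

lemma psd_sym_quadratic_form_eq_0_imp_mult_eq_0:
  fixes A :: "real^'n^'n"
  assumes A: "psd_sym A" and x: "x \<bullet> (A *v x) = 0"
  shows "A *v x = 0"
proof -
  have sym: "transpose A = A" and nonneg: "\<And>y. 0 \<le> y \<bullet> (A *v y)"
    using A by (auto simp: psd_sym_def)
  have "(A *v x) \<bullet> (A *v x) = 0"
    by (rule self_adjoint_nonneg_zero_imp_orthogonal[where V=UNIV, OF matrix_vector_mul_linear
          symmetric_matrix_self_adjoint[OF sym]]) (simp_all add: nonneg x)
  then show ?thesis by simp
qed

lemma symmetric_matrix_eigenvector_in_invariant_subspace:
  fixes A :: "real^'n^'n"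
  assumes sym: "transpose A = A" and V: "subspace V"
    and inv: "\<And>v. v \<in> V \<Longrightarrow> A *v v \<in> V" and ne: "V \<noteq> {0}"
  obtains x where "x \<in> V" "norm x = 1" "A *v x = (x \<bullet> (A *v x)) *\<^sub>R x"
proof -
  let ?S = "V \<inter> sphere 0 1"
  obtain v where v: "v \<in> V" "v \<noteq> 0" using ne V subspace_0 by blast
  then have "v /\<^sub>R norm v \<in> ?S" using V by (auto simp: subspace_scale)
  then have ne_S: "?S \<noteq> {}" by blast
  have compact_S: "compact ?S" by (intro closed_Int_compact closed_subspace V compact_sphere)
  have "continuous_on ?S (\<lambda>x. x \<bullet> (A *v x))"
    by (intro continuous_intros linear_continuous_on) (simp add: linear_conv_bounded_linear)
  from continuous_attains_sup[OF compact_S ne_S this] obtain x where x: "x \<in> ?S"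
    and max: "\<And>y. y \<in> ?S \<Longrightarrow> y \<bullet> (A *v y) \<le> x \<bullet> (A *v x)"
    by blast
  define lam where "lam = x \<bullet> (A *v x)"
  have xx: "x \<bullet> x = 1" using x by (simp add: dot_square_norm)
  \<comment> \<open>x maximizes the Rayleigh quotient on V, so lam I - A is positive semidefinite on V\<close>
  have bound: "y \<bullet> (A *v y) \<le> lam * (y \<bullet> y)" if "y \<in> V" for y
  proof (cases "y = 0")
    case False
    have "y /\<^sub>R norm y \<in> ?S" using that V False by (auto simp: subspace_scale)
    then have "(y /\<^sub>R norm y) \<bullet> (A *v (y /\<^sub>R norm y)) \<le> lam"
      unfolding lam_def by (rule max)
    then have "(y \<bullet> (A *v y)) / (norm y)\<^sup>2 \<le> lam"
      by (simp add: matrix_vector_mult_scaleR power2_eq_square divide_simps)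
    then show ?thesis using False by (simp add: divide_simps power2_norm_eq_inner)
  qed simp
  define f where "f y = lam *\<^sub>R y - A *v y" for y
  have lin: "linear f" by (simp add: linear_iff f_def algebra_simps)
  have adj: "u \<bullet> f w = f u \<bullet> w" for u w
    using symmetric_matrix_self_adjoint[OF sym, of u w]
    by (simp add: f_def inner_diff_left inner_diff_right inner_commute)
  have "f x \<bullet> f x = 0"
  proof (rule self_adjoint_nonneg_zero_imp_orthogonal[OF lin adj V])
    show "0 \<le> y \<bullet> f y" if "y \<in> V" for y
      using bound[OF that] by (simp add: f_def inner_diff_right)
    show "x \<in> V" "x \<bullet> f x = 0" using x xx by (auto simp: f_def inner_diff_right lam_def)
    show "f x \<in> V" using x inv V by (auto simp: f_def intro: subspace_diff subspace_scale)
  qed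
  then have "A *v x = lam *\<^sub>R x" by (simp add: f_def)
  with x show ?thesis unfolding lam_def by (intro that) auto
qed

lemma self_adjoint_imp_symmetric_matrix:
  fixes A :: "real^'n^'n"
  assumes "\<And>u v. u \<bullet> (A *v v) = (A *v u) \<bullet> v"
  shows "transpose A = A"
proof (rule matrix_eq[THEN iffD2], intro allI euclidean_eqI[where 'a="real^'n"])
  fix u v :: "real^'n"
  have "(transpose A *v u) \<bullet> v = u \<bullet> (A *v v)" by (simp add: dot_lmul_matrix)
  then show "(transpose A *v u) \<bullet> v = (A *v u) \<bullet> v" using assms by simp
qed

lemma span_insert_unit_orthogonal_complement:
  fixes x :: "'a::real_inner"
  assumes V: "subspace V" and x: "x \<in> V" "x \<bullet> x = 1"
    and B: "span B = V \<inter> {v. x \<bullet> v = 0}"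
  shows "span (insert x B) = V"
proof
  have "B \<subseteq> V" using B span_superset by blast
  then show "span (insert x B) \<subseteq> V" using V x by (intro span_minimal) auto
  show "V \<subseteq> span (insert x B)"
  proof
    fix v assume v: "v \<in> V"
    have "v - (x \<bullet> v) *\<^sub>R x \<in> span B"
      using v x V by (auto simp: B inner_diff_right intro: subspace_diff subspace_scale)
    then show "v \<in> span (insert x B)" by (auto simp: span_breakdown_eq)
  qed
qed

lemma symmetric_matrix_orthonormal_eigenbasis_of_invariant_subspace:
  fixes A :: "real^'n^'n"
  assumes sym: "transpose A = A"
  shows "subspace V \<Longrightarrow> (\<And>v. v \<in> V \<Longrightarrow> A *v v \<in> V) \<Longrightarrow>
    \<exists>B. B \<subseteq> V \<and> pairwise orthogonal B \<and> span B = V \<and>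
      (\<forall>b\<in>B. norm b = 1 \<and> A *v b = (b \<bullet> (A *v b)) *\<^sub>R b)"
proof (induction "dim V" arbitrary: V rule: less_induct)
  case less
  show ?case
  proof (cases "V = {0}")
    case True
    then show ?thesis by (intro exI[of _ "{}"]) auto
  next
    case False
    obtain x where x: "x \<in> V" "norm x = 1" "A *v x = (x \<bullet> (A *v x)) *\<^sub>R x"
      using symmetric_matrix_eigenvector_in_invariant_subspace[OF sym less.prems False] .
    have xx: "x \<bullet> x = 1" using x by (simp add: dot_square_norm)
    define W where "W = V \<inter> {v. x \<bullet> v = 0}"
    have W: "subspace W" unfolding W_def
      by (intro subspace_inter less.prems(1)) (auto simp: subspace_def inner_add_right)
    have inv_W: "A *v v \<in> W" if "v \<in> W" for v
    proof -
      have "x \<bullet> (A *v v) = (A *v x) \<bullet> v" by (rule symmetric_matrix_self_adjoint[OF sym])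
      also have "\<dots> = (x \<bullet> (A *v x)) * (x \<bullet> v)" by (subst x(3)) simp
      finally show ?thesis using that less.prems(2) by (auto simp: W_def)
    qed
    have "x \<notin> W" using xx by (simp add: W_def)
    with x(1) have "W \<subset> V" unfolding W_def by blast
    moreover have "span W = W" "span V = V" using W less.prems(1) by (simp_all add: span_eq_iff)
    ultimately have "dim W < dim V" by (metis dim_psubset)
    then obtain B where B: "B \<subseteq> W" "pairwise orthogonal B" "span B = W"
      "\<forall>b\<in>B. norm b = 1 \<and> A *v b = (b \<bullet> (A *v b)) *\<^sub>R b"
      using less.hyps W inv_W by meson
    show ?thesis
    proof (intro exI[of _ "insert x B"] conjI)
      show "insert x B \<subseteq> V" using B(1) x by (auto simp: W_def)
      show "pairwise orthogonal (insert x B)"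
        using B(1,2) xx by (auto simp: pairwise_insert W_def orthogonal_def inner_commute)
      show "span (insert x B) = V"
        using span_insert_unit_orthogonal_complement less.prems(1) x(1) xx B(3) by (simp add: W_def)
      show "\<forall>b\<in>insert x B. norm b = 1 \<and> A *v b = (b \<bullet> (A *v b)) *\<^sub>R b" using B(4) x by auto
    qed
  qed
qed

lemma symmetric_matrix_orthonormal_eigenbasis:
  fixes A :: "real^'n^'n"
  assumes "transpose A = A"
  obtains B where "finite B" "pairwise orthogonal B" "span B = UNIV"
    "\<And>b. b \<in> B \<Longrightarrow> norm b = 1" "\<And>b. b \<in> B \<Longrightarrow> A *v b = (b \<bullet> (A *v b)) *\<^sub>R b"
proof -
  obtain B where "pairwise orthogonal B" "span B = UNIV"
    "\<forall>b\<in>B. norm b = 1 \<and> A *v b = (b \<bullet> (A *v b)) *\<^sub>R b"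
    using symmetric_matrix_orthonormal_eigenbasis_of_invariant_subspace[OF assms subspace_UNIV]
    by auto
  then show ?thesis using that pairwise_orthogonal_imp_finite by blast
qed

lemma matrix_eq_on_spanning_set:
  fixes A C :: "real^'n^'m"
  assumes B: "span B = UNIV" and eq: "\<And>b. b \<in> B \<Longrightarrow> A *v b = C *v b"
  shows "A = C"
proof (rule matrix_eq[THEN iffD2], intro allI)
  fix x
  show "A *v x = C *v x"
    by (rule linear_eq_on_span[where B=B]) (use B eq in auto)
qed

lemma psd_sym_sqrt_on_eigenvector:
  fixes T :: "real^'n^'n"
  assumes T: "psd_sym T" and b: "(T ** T) *v b = lam *\<^sub>R b" and lam: "0 \<le> lam"
  shows "T *v b = sqrt lam *\<^sub>R b"
proof -
  have sym: "transpose T = T" using T by (simp add: psd_sym_def)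
  define mu where "mu = sqrt lam"
  define w where "w = T *v b - mu *\<^sub>R b"
  have "T *v w = lam *\<^sub>R b - mu *\<^sub>R (T *v b)"
    using b by (simp add: w_def matrix_vector_mult_diff_distrib matrix_vector_mult_scaleR
        matrix_vector_mul_assoc)
  also have "lam = mu * mu" using lam by (simp add: mu_def)
  finally have Tw: "T *v w = - mu *\<^sub>R w" by (simp add: w_def algebra_simps)
  have "w = 0"
  proof (cases "mu = 0")
    case True
    then have "w = T *v b" "T *v w = 0" using Tw by (simp_all add: w_def)
    then have "w \<bullet> w = 0" using symmetric_matrix_self_adjoint[OF sym, of b w] by simp
    then show ?thesis by simp
  next
    case False
    have "0 \<le> w \<bullet> (T *v w)" using T by (simp add: psd_sym_def)
    also have "\<dots> = - mu * (w \<bullet> w)" using Tw by simp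
    moreover have "0 < mu" using False lam by (simp add: mu_def)
    ultimately have "w \<bullet> w \<le> 0" by (simp add: mult_le_0_iff)
    then show ?thesis by (metis inner_eq_zero_iff inner_ge_zero order_antisym)
  qed
  then show ?thesis by (simp add: w_def mu_def)
qed

lemma psd_sym_sqrt_exists:
  fixes A :: "real^'n^'n"
  assumes A: "psd_sym A"
  obtains S where "psd_sym S" "S ** S = A"
proof -
  obtain B where B: "finite B" "pairwise orthogonal B" "span B = UNIV"
    and unit: "\<And>b. b \<in> B \<Longrightarrow> norm b = 1"
    and eigen: "\<And>b. b \<in> B \<Longrightarrow> A *v b = (b \<bullet> (A *v b)) *\<^sub>R b"
    using symmetric_matrix_orthonormal_eigenbasis A by (metis psd_sym_def)
  define lam where "lam b = b \<bullet> (A *v b)" for b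
  have lam: "0 \<le> lam b" for b using A by (simp add: psd_sym_def lam_def)
  have ortho: "b' \<bullet> b = (if b' = b then 1 else 0)" if "b \<in> B" "b' \<in> B" for b b'
    using B(2) unit that by (auto simp: pairwise_def orthogonal_def dot_square_norm)
  define f where "f x = (\<Sum>b\<in>B. (sqrt (lam b) * (b \<bullet> x)) *\<^sub>R b)" for x
  define S where "S = matrix f"
  have "linear f"
    unfolding linear_iff f_def by (simp add: inner_add_right algebra_simps sum.distrib scaleR_sum_right)
  then have Sx: "S *v x = f x" for x by (simp add: S_def)
  have Sb: "S *v b = sqrt (lam b) *\<^sub>R b" if "b \<in> B" for b
  proof -
    have "S *v b = (\<Sum>b'\<in>B. if b' = b then sqrt (lam b') *\<^sub>R b' else 0)"
      unfolding Sx f_def using that by (intro sum.cong) (auto simp: ortho)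
    then show ?thesis using B(1) that by simp
  qed
  have "transpose S = S"
    by (rule self_adjoint_imp_symmetric_matrix)
      (simp add: Sx f_def inner_sum_right inner_sum_left algebra_simps inner_commute)
  moreover have "0 \<le> x \<bullet> (S *v x)" for x
  proof -
    have "x \<bullet> (S *v x) = (\<Sum>b\<in>B. sqrt (lam b) * (b \<bullet> x)\<^sup>2)"
      by (simp add: Sx f_def inner_sum_right power2_eq_square algebra_simps inner_commute)
    also have "\<dots> \<ge> 0" using lam by (intro sum_nonneg) simp
    finally show ?thesis .
  qed
  moreover have "S ** S = A"
  proof (rule matrix_eq_on_spanning_set[OF B(3)])
    fix b assume "b \<in> B"
    then show "(S ** S) *v b = A *v b"
      using Sb lam[of b] eigen
      by (simp add: matrix_vector_mul_assoc[symmetric] matrix_vector_mult_scaleR lam_def)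
  qed
  ultimately show ?thesis by (intro that) (auto simp: psd_sym_def)
qed

lemma psd_sym_sqrt_unique:
  fixes A :: "real^'n^'n"
  assumes A: "psd_sym A" and S: "psd_sym S" "S ** S = A" and T: "psd_sym T" "T ** T = A"
  shows "S = T"
proof -
  obtain B where B: "span B = UNIV" and eigen: "\<And>b. b \<in> B \<Longrightarrow> A *v b = (b \<bullet> (A *v b)) *\<^sub>R b"
    using symmetric_matrix_orthonormal_eigenbasis A by (metis psd_sym_def)
  show ?thesis
  proof (rule matrix_eq_on_spanning_set[OF B])
    fix b assume "b \<in> B"
    moreover have "0 \<le> b \<bullet> (A *v b)" using A by (simp add: psd_sym_def)
    ultimately show "S *v b = T *v b"
      using psd_sym_sqrt_on_eigenvector[OF S(1)] psd_sym_sqrt_on_eigenvector[OF T(1)] S(2) T(2) eigen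
      by metis
  qed
qed

lemma
  fixes A :: "real^'n^'n"
  assumes "psd_sym A"
  shows psd_sym_psd_sqrt: "psd_sym (psd_sqrt A)"
    and psd_sqrt_mult_self: "psd_sqrt A ** psd_sqrt A = A"
proof -
  obtain S where "psd_sym S" "S ** S = A" using psd_sym_sqrt_exists[OF assms] .
  then have "\<exists>!S. psd_sym S \<and> S ** S = A" using psd_sym_sqrt_unique[OF assms] by blast
  from theI'[OF this] show "psd_sym (psd_sqrt A)" "psd_sqrt A ** psd_sqrt A = A"
    unfolding psd_sqrt_def by auto
qed

lemma norm_psd_sqrt_mult_power2:
  assumes "psd_sym A"
  shows "(norm (psd_sqrt A *v x))\<^sup>2 = x \<bullet> (A *v x)"
  using symmetric_matrix_self_adjoint[of "psd_sqrt A" x "psd_sqrt A *v x"]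
    psd_sym_psd_sqrt[OF assms] psd_sqrt_mult_self[OF assms]
  by (simp add: psd_sym_def power2_norm_eq_inner matrix_vector_mul_assoc)

lemma norm_Pair_rotated_cone_iff:
  fixes v :: "'a::real_normed_vector" and t :: real
  shows "norm (v, (t - 1) / 2) \<le> (t + 1) / 2 \<longleftrightarrow> (norm v)\<^sup>2 \<le> t"
proof (cases "0 \<le> t + 1")
  case True
  have norm: "norm (v, (t - 1) / 2) = sqrt ((norm v)\<^sup>2 + ((t - 1) / 2)\<^sup>2)"
    by (simp add: norm_Pair power_divide)
  have "norm (v, (t - 1) / 2) \<le> (t + 1) / 2 \<longleftrightarrow> (norm v)\<^sup>2 + ((t - 1) / 2)\<^sup>2 \<le> ((t + 1) / 2)\<^sup>2"
    unfolding norm by (rule real_sqrt_le_iff') (use True in auto)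
  also have "\<dots> \<longleftrightarrow> (norm v)\<^sup>2 \<le> t" by (simp add: power2_eq_square field_simps)
  finally show ?thesis .
next
  case False
  have "(t + 1) / 2 < 0" using False by simp
  also have "0 \<le> norm (v, (t - 1) / 2)" by (rule norm_ge_zero)
  finally have "(t + 1) / 2 < norm (v, (t - 1) / 2)" .
  moreover have "t < (norm v)\<^sup>2" using False zero_le_power2[of "norm v"] by linarith
  ultimately show ?thesis by simp
qed

lemma psd_sqrt_cone_iff:
  assumes "psd_sym A"
  shows "norm (psd_sqrt A *v x, (t - 1) / 2) \<le> (t + 1) / 2 \<longleftrightarrow> x \<bullet> (A *v x) \<le> t"
  by (simp only: norm_Pair_rotated_cone_iff norm_psd_sqrt_mult_power2[OF assms])

lemma quadratic_attains_level_with_sign: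
  fixes q s \<beta> g c :: real
  assumes g: "0 < g" and qs: "q \<le> s"
  obtains \<alpha> where "q + 2 * \<alpha> * \<beta> + \<alpha>\<^sup>2 * g = s" "\<alpha> * c \<le> 0"
proof -
  define r where "r = sqrt (\<beta>\<^sup>2 + g * (s - q))"
  have r2: "r\<^sup>2 = \<beta>\<^sup>2 + g * (s - q)" using g qs by (simp add: r_def)
  have r: "\<bar>\<beta>\<bar> \<le> r" unfolding r_def using g qs by (intro real_le_rsqrt) simp
  \<comment> \<open>the two roots of the quadratic in \<alpha> have opposite signs; pick the one against c\<close>
  define \<alpha> where "\<alpha> = (if c \<le> 0 then r - \<beta> else - r - \<beta>) / g"
  show ?thesis
  proof
    have "(g * \<alpha> + \<beta>)\<^sup>2 = r\<^sup>2" using g by (simp add: \<alpha>_def power2_eq_square)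
    then have "g * (q + 2 * \<alpha> * \<beta> + \<alpha>\<^sup>2 * g) = g * s"
      using r2 by (simp add: power2_eq_square algebra_simps)
    then show "q + 2 * \<alpha> * \<beta> + \<alpha>\<^sup>2 * g = s" using g by simp
    show "\<alpha> * c \<le> 0"
      using r g by (auto simp: \<alpha>_def mult_le_0_iff divide_simps)
  qed
qed

lemma exists_direction_moving_only_one_form:
  fixes Q :: "'i \<Rightarrow> real^'n^'n"
  assumes psd_I: "\<And>i. i \<in> I \<Longrightarrow> psd_sym (Q i)" and psd_j: "psd_sym (Q j)"
    and dim: "dim (B \<union> null_space (Q j) \<union> (\<Union>i\<in>I. range_space (Q i))) < CARD('n)"
  obtains d where "\<And>v. v \<in> B \<Longrightarrow> v \<bullet> d = 0" "\<And>i. i \<in> I \<Longrightarrow> Q i *v d = 0"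
    "0 < d \<bullet> (Q j *v d)"
proof -
  let ?S = "B \<union> null_space (Q j) \<union> (\<Union>i\<in>I. range_space (Q i))"
  obtain d where d: "d \<noteq> 0" "\<And>y. y \<in> span ?S \<Longrightarrow> orthogonal d y"
    using orthogonal_to_subspace_exists[of ?S] dim by (auto simp: DIM_cart)
  have perp: "d \<bullet> y = 0" if "y \<in> ?S" for y
    using d(2)[OF span_base[OF that]] by (simp add: orthogonal_def)
  show ?thesis
  proof
    show "v \<bullet> d = 0" if "v \<in> B" for v using perp[of v] that by (simp add: inner_commute)
    show "Q i *v d = 0" if i: "i \<in> I" for i
    proof (rule psd_sym_quadratic_form_eq_0_imp_mult_eq_0[OF psd_I[OF i]])
      show "d \<bullet> (Q i *v d) = 0" using i by (intro perp) (auto simp: range_space_def)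
    qed
    have "d \<bullet> (Q j *v d) \<noteq> 0"
    proof
      assume "d \<bullet> (Q j *v d) = 0"
      then have "d \<in> null_space (Q j)" using psd_sym_quadratic_form_eq_0_imp_mult_eq_0[OF psd_j]
        by (simp add: null_space_def)
      then show False using perp[of d] d(1) by simp
    qed
    moreover have "0 \<le> d \<bullet> (Q j *v d)" using psd_j by (simp add: psd_sym_def)
    ultimately show "0 < d \<bullet> (Q j *v d)" by simp
  qed
qed

lemma exists_point_adjusting_one_form:
  fixes Q :: "'i \<Rightarrow> real^'n^'n"
  assumes psd_I: "\<And>i. i \<in> I \<Longrightarrow> psd_sym (Q i)" and psd_j: "psd_sym (Q j)"
    and dim: "dim (B \<union> null_space (Q j) \<union> (\<Union>i\<in>I. range_space (Q i))) < CARD('n)"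
    and le: "y \<bullet> (Q j *v y) \<le> s"
  obtains z where "\<And>v. v \<in> B \<Longrightarrow> v \<bullet> z = v \<bullet> y"
    "\<And>i. i \<in> I \<Longrightarrow> z \<bullet> (Q i *v z) = y \<bullet> (Q i *v y)"
    "z \<bullet> (Q j *v z) = s" "w \<bullet> z \<le> w \<bullet> y"
proof -
  obtain d where B: "\<And>v. v \<in> B \<Longrightarrow> v \<bullet> d = 0" and I: "\<And>i. i \<in> I \<Longrightarrow> Q i *v d = 0"
    and pos: "0 < d \<bullet> (Q j *v d)"
    using exists_direction_moving_only_one_form[OF psd_I psd_j dim] by blast
  obtain \<alpha> where \<alpha>: "y \<bullet> (Q j *v y) + 2 * \<alpha> * (d \<bullet> (Q j *v y)) + \<alpha>\<^sup>2 * (d \<bullet> (Q j *v d)) = s"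
    "\<alpha> * (w \<bullet> d) \<le> 0"
    using quadratic_attains_level_with_sign[OF pos le] .
  have sym: "transpose (Q i) = Q i" if "i \<in> insert j I" for i
    using that psd_I psd_j by (auto simp: psd_sym_def)
  show ?thesis
  proof (rule that[of "y + \<alpha> *\<^sub>R d"])
    show "v \<bullet> (y + \<alpha> *\<^sub>R d) = v \<bullet> y" if "v \<in> B" for v using B[OF that] by (simp add: inner_add_right)
    show "(y + \<alpha> *\<^sub>R d) \<bullet> (Q i *v (y + \<alpha> *\<^sub>R d)) = y \<bullet> (Q i *v y)" if i: "i \<in> I" for i
    proof -
      have "d \<bullet> (Q i *v y) = (Q i *v d) \<bullet> y"
        using i by (intro symmetric_matrix_self_adjoint sym) simp
      then show ?thesis using I[OF i] sym[of i] i by (simp add: symmetric_matrix_quadratic_form_add_scaleR)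
    qed
    show "(y + \<alpha> *\<^sub>R d) \<bullet> (Q j *v (y + \<alpha> *\<^sub>R d)) = s"
      using \<alpha>(1) sym[of j] by (simp add: symmetric_matrix_quadratic_form_add_scaleR)
    show "w \<bullet> (y + \<alpha> *\<^sub>R d) \<le> w \<bullet> y" using \<alpha>(2) by (simp add: inner_add_right mult.commute)
  qed
qed

lemma exists_point_attaining_form_bounds:
  fixes Q :: "'i \<Rightarrow> real^'n^'n"
  assumes psd: "\<And>i. i \<in> J \<Longrightarrow> psd_sym (Q i)"
  shows "finite F \<Longrightarrow> F \<subseteq> J \<Longrightarrow>
    (\<And>j. j \<in> F \<Longrightarrow> dim (B \<union> null_space (Q j) \<union> (\<Union>i\<in>J - {j}. range_space (Q i))) < CARD('n)) \<Longrightarrow>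
    (\<And>j. j \<in> F \<Longrightarrow> y \<bullet> (Q j *v y) \<le> s j) \<Longrightarrow>
    \<exists>z. (\<forall>v\<in>B. v \<bullet> z = v \<bullet> y) \<and> (\<forall>i\<in>J - F. z \<bullet> (Q i *v z) = y \<bullet> (Q i *v y)) \<and>
      (\<forall>j\<in>F. z \<bullet> (Q j *v z) = s j) \<and> w \<bullet> z \<le> w \<bullet> y"
proof (induction F rule: finite_induct)
  case empty
  show ?case by auto
next
  case (insert j F)
  then obtain z where z: "\<forall>v\<in>B. v \<bullet> z = v \<bullet> y" "\<forall>i\<in>J - F. z \<bullet> (Q i *v z) = y \<bullet> (Q i *v y)"
    "\<forall>j\<in>F. z \<bullet> (Q j *v z) = s j" "w \<bullet> z \<le> w \<bullet> y"
    by auto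
  have j: "j \<in> J - F" using insert by auto
  then have "z \<bullet> (Q j *v z) \<le> s j" using z(2) insert by auto
  then obtain z' where z': "\<And>v. v \<in> B \<Longrightarrow> v \<bullet> z' = v \<bullet> z"
    "\<And>i. i \<in> J - {j} \<Longrightarrow> z' \<bullet> (Q i *v z') = z \<bullet> (Q i *v z)"
    "z' \<bullet> (Q j *v z') = s j" "w \<bullet> z' \<le> w \<bullet> z"
    using exists_point_adjusting_one_form[of "J - {j}" Q j B] psd j insert.prems by blast
  have "z' \<bullet> (Q i *v z') = s i" if "i \<in> F" for i
    using that z(3) z'(2)[of i] j insert.prems(1) by auto
  then show ?case
    using z z' j by (intro exI[of _ z']) auto
qed

lemma Kset_subset: "Kset m p a \<subseteq> {1..m}"
  by (auto simp: Kset_def)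

lemma coeff_eq_0_outside_Kset: "j \<in> {1..m} - Kset m p a \<Longrightarrow> i \<in> {1..p} \<Longrightarrow> a i j = 0"
  by (auto simp: Kset_def)

lemma sum_split_Kset:
  "(\<Sum>j=1..m. f j) = (\<Sum>j\<in>{1..m} - Kset m p a. f j) + (\<Sum>j\<in>Kset m p a. f j)"
  using Kset_subset by (intro sum.subset_diff) auto

lemma cr_obj_lifted:
  assumes "\<And>j. j \<in> Kset m p a \<Longrightarrow> t j = x \<bullet> (Q j *v x)"
  shows "cr_obj m p Q a b c x t = gfun m Q a b c 0 x"
proof -
  have "(\<Sum>j\<in>Kset m p a. a 0 j * t j) = (\<Sum>j\<in>Kset m p a. a 0 j * (x \<bullet> (Q j *v x)))"
    using assms by simp
  then show ?thesis unfolding cr_obj_def gfun_def sum_split_Kset[of _ m p a] by simp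
qed

lemma cr_con_lifted:
  assumes "\<And>j. j \<in> Kset m p a \<Longrightarrow> t j = x \<bullet> (Q j *v x)" and i: "i \<in> {1..p}"
  shows "cr_con m p a b c i x t = gfun m Q a b c i x"
proof -
  have "(\<Sum>j\<in>{1..m} - Kset m p a. a i j * (x \<bullet> (Q j *v x))) = 0"
    using coeff_eq_0_outside_Kset[of _ m p a i] i by (intro sum.neutral) simp
  moreover have "(\<Sum>j\<in>Kset m p a. a i j * t j) = (\<Sum>j\<in>Kset m p a. a i j * (x \<bullet> (Q j *v x)))"
    using assms by simp
  ultimately show ?thesis unfolding cr_con_def gfun_def sum_split_Kset[of _ m p a] by simp
qed

lemma cr_feasible_iff:
  assumes psd: "\<forall>j\<in>{1..m}. psd_sym (Q j)"
  shows "cr_feasible m p Q a b c l u x t \<longleftrightarrow>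
    (\<forall>i\<in>{1..p}. l i \<le> ereal (cr_con m p a b c i x t) \<and> ereal (cr_con m p a b c i x t) \<le> u i) \<and>
    (\<forall>j\<in>Kset m p a. x \<bullet> (Q j *v x) \<le> t j)"
proof -
  have "norm (psd_sqrt (Q j) *v x, (t j - 1) / 2) \<le> (t j + 1) / 2 \<longleftrightarrow> x \<bullet> (Q j *v x) \<le> t j"
    if "j \<in> Kset m p a" for j
    using psd Kset_subset[of m p a] that by (intro psd_sqrt_cone_iff) blast
  then show ?thesis unfolding cr_feasible_def by blast
qed

lemma cr_feasible_lift_iff:
  assumes psd: "\<forall>j\<in>{1..m}. psd_sym (Q j)"
  shows "cr_feasible m p Q a b c l u x (\<lambda>j. x \<bullet> (Q j *v x)) \<longleftrightarrow> qcqp_feasible m p Q a b c l u x"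
  by (simp add: cr_feasible_iff[OF psd] cr_con_lifted qcqp_feasible_def)

lemma cr_feasible_imp_qcqp_feasible_le:
  fixes Q :: "nat \<Rightarrow> real^'n^'n"
  assumes psd: "\<forall>j\<in>{1..m}. psd_sym (Q j)"
    and dimcond: "\<forall>j\<in>Kset m p a.
        dim (span (b ` {1..p} \<union> null_space (Q j) \<union> (\<Union>i\<in>{1..m} - {j}. range_space (Q i))))
          \<le> CARD('n) - 1"
    and feasible: "cr_feasible m p Q a b c l u y s"
  obtains z where "qcqp_feasible m p Q a b c l u z" "gfun m Q a b c 0 z \<le> cr_obj m p Q a b c y s"
proof -
  have dim: "dim (b ` {1..p} \<union> null_space (Q j) \<union> (\<Union>i\<in>{1..m} - {j}. range_space (Q i)))
      < CARD('n)" if "j \<in> Kset m p a" for j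
  proof -
    have "dim (b ` {1..p} \<union> null_space (Q j) \<union> (\<Union>i\<in>{1..m} - {j}. range_space (Q i)))
        \<le> CARD('n) - 1"
      using dimcond that by simp
    moreover have "0 < CARD('n)" by simp
    ultimately show ?thesis by linarith
  qed
  have fin: "finite (Kset m p a)" by (rule finite_subset[OF Kset_subset]) simp
  have le: "y \<bullet> (Q j *v y) \<le> s j" if "j \<in> Kset m p a" for j
    using feasible that by (simp add: cr_feasible_iff[OF psd])
  have "\<exists>z. (\<forall>v\<in>b ` {1..p}. v \<bullet> z = v \<bullet> y) \<and>
      (\<forall>j\<in>{1..m} - Kset m p a. z \<bullet> (Q j *v z) = y \<bullet> (Q j *v y)) \<and>
      (\<forall>j\<in>Kset m p a. z \<bullet> (Q j *v z) = s j) \<and> b 0 \<bullet> z \<le> b 0 \<bullet> y"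
    by (rule exists_point_attaining_form_bounds[OF _ fin Kset_subset dim le]) (use psd in simp_all)
  then obtain z where b: "\<forall>v\<in>b ` {1..p}. v \<bullet> z = v \<bullet> y"
    and outside: "\<forall>j\<in>{1..m} - Kset m p a. z \<bullet> (Q j *v z) = y \<bullet> (Q j *v y)"
    and inside: "\<forall>j\<in>Kset m p a. z \<bullet> (Q j *v z) = s j" and b0: "b 0 \<bullet> z \<le> b 0 \<bullet> y"
    by blast
  have "cr_con m p a b c i z s = cr_con m p a b c i y s" if "i \<in> {1..p}" for i
    using b that by (simp add: cr_con_def)
  moreover have "cr_con m p a b c i z s = gfun m Q a b c i z" if "i \<in> {1..p}" for i
    using inside that by (intro cr_con_lifted) auto
  ultimately have "qcqp_feasible m p Q a b c l u z"
    using feasible by (simp add: cr_feasible_iff[OF psd] qcqp_feasible_def)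
  moreover have "gfun m Q a b c 0 z = cr_obj m p Q a b c z s"
    using inside by (intro cr_obj_lifted[symmetric]) auto
  moreover have "cr_obj m p Q a b c z s \<le> cr_obj m p Q a b c y s"
    using outside b0 by (simp add: cr_obj_def)
  ultimately show ?thesis using that by simp
qed

lemma qcqp_lower_bound_iff_cr_lower_bound:
  fixes Q :: "nat \<Rightarrow> real^'n^'n"
  assumes psd: "\<forall>j\<in>{1..m}. psd_sym (Q j)"
    and dimcond: "\<forall>j\<in>Kset m p a.
        dim (span (b ` {1..p} \<union> null_space (Q j) \<union> (\<Union>i\<in>{1..m} - {j}. range_space (Q i))))
          \<le> CARD('n) - 1"
  shows "(\<forall>y. qcqp_feasible m p Q a b c l u y \<longrightarrow> v \<le> gfun m Q a b c 0 y) \<longleftrightarrow>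
    (\<forall>y s. cr_feasible m p Q a b c l u y s \<longrightarrow> v \<le> cr_obj m p Q a b c y s)"
proof (intro iffI allI impI)
  fix y s
  assume bound: "\<forall>y. qcqp_feasible m p Q a b c l u y \<longrightarrow> v \<le> gfun m Q a b c 0 y"
    and "cr_feasible m p Q a b c l u y s"
  then obtain z where "qcqp_feasible m p Q a b c l u z" "gfun m Q a b c 0 z \<le> cr_obj m p Q a b c y s"
    using cr_feasible_imp_qcqp_feasible_le[OF psd dimcond] by blast
  then show "v \<le> cr_obj m p Q a b c y s" using bound by (meson order_trans)
next
  fix y
  assume "\<forall>y s. cr_feasible m p Q a b c l u y s \<longrightarrow> v \<le> cr_obj m p Q a b c y s"
    and "qcqp_feasible m p Q a b c l u y"
  then show "v \<le> gfun m Q a b c 0 y"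
    using cr_feasible_lift_iff[OF psd] cr_obj_lifted[of m p a "\<lambda>j. y \<bullet> (Q j *v y)" y Q b c]
    by force
qed

theorem theorem4:
  fixes Q :: "nat \<Rightarrow> real^'n^'n" and a :: "nat \<Rightarrow> nat \<Rightarrow> real"
    and b :: "nat \<Rightarrow> real^'n" and c :: "nat \<Rightarrow> real"
    and l u :: "nat \<Rightarrow> ereal" and m p :: nat
  assumes psd: "\<forall>j\<in>{1..m}. psd_sym (Q j)"
    and a_vals: "\<forall>i\<in>{0..p}. \<forall>j\<in>{1..m}. a i j \<in> {-1, 0, 1}"
    and lu: "\<forall>i\<in>{1..p}. l i \<le> u i"
    and dimcond: "\<forall>j\<in>Kset m p a.
        dim (span (b ` {1..p} \<union> null_space (Q j) \<union> (\<Union>i\<in>{1..m} - {j}. range_space (Q i))))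
          \<le> CARD('n) - 1"
    and bounded: "cr_value m p Q a b c l u > -\<infinity>"
  shows "\<forall>xs. qcqp_solves m p Q a b c l u xs \<longleftrightarrow>
           cr_solves m p Q a b c l u xs (\<lambda>j. xs \<bullet> (Q j *v xs))"
proof -
  have lift: "cr_feasible m p Q a b c l u x (\<lambda>j. x \<bullet> (Q j *v x)) \<longleftrightarrow> qcqp_feasible m p Q a b c l u x"
    for x by (rule cr_feasible_lift_iff[OF psd])
  have obj: "cr_obj m p Q a b c x (\<lambda>j. x \<bullet> (Q j *v x)) = gfun m Q a b c 0 x" for x
    by (rule cr_obj_lifted) simp
  show ?thesis
    unfolding qcqp_solves_def cr_solves_def lift obj
    by (simp add: qcqp_lower_bound_iff_cr_lower_bound[OF psd dimcond])
qed

end
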